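(* Let $L,n$ be positive integers and $B=(B_1,\dots,B_L)\in\mathcal M(L,n)$. Then $\rho_N(B)\in\mathrm{MLQ}_0(\mu,n)$ for some partition $\mu$, and $\rho_Q(B)$ is a semistandard Young tableau of shape $\mu'$ with content $(|B_1|,\dots,|B_L|)$.
   Context: $\mathcal M(L,n)$ is the set of tuples $B=(B_1,\dots,B_L)$ of subsets of $[n]$, drawn with rows $1..L$ bottom to top and columns $1..n$ left to right, ball in $(r,j)$ iff $j\in B_r$; tuples whose top rows are empty are identified with the tuple obtained by deleting those rows. For a partition $\mu$ ($\mu'$ its conjugate) with $n\ge\ell(\mu)$, $\mathrm{MLQ}(\mu,n)$ is the set of tuples $(B_1,\dots,B_{\mu_1})$ with $|B_j|=\mu'_j$. Diagrams are in French notation (row 1 at the bottom); semistandard means weakly increasing along rows, strictly increasing up columns; content $(c_1,c_2,\dots)$ counts entries equal to $1,2,\dots$. The column word $\mathrm{cw}(B)$ scans columns left to right, each top to bottom, recording row numbers of balls. Major index: for $M\in\mathrm{MLQ}(\mu,n)$, for $r=\mu_1,\dots,2$, unlabelled balls of row $r$ get label $r$; then balls of row $r$ in decreasing label order (left to right among ties) are each paired with the first unlabelled ball of row $r-1$ weakly to the right, cyclically modulo $n$, which gets the same label; a pairing wraps if the lower ball is strictly left of the upper. $\operatorname{maj}(M)=\sum(\ell(p)-r(p)+1)$ over wrapping pairings ($r(p)$ upper row, $\ell(p)$ label); $\mathrm{MLQ}_0(\mu,n)$ is the set of $M$ with $\operatorname{maj}(M)=0$. Collapsing. $\mathrm{Par}_i(w)$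 writes "(" for each letter $i+1$ and ")" for each letter $i$ of $w$, left to right, and iteratively matches a "(" with a ")" to its right when adjacent or separated only by matched parentheses. $e_i^\star(B)$ moves every ball of row $i+1$ whose letter in $\mathrm{cw}(B)$ is unmatched in $\mathrm{Par}_i(\mathrm{cw}(B))$ down to row $i$ in the same column. Products act right to left; $e^\star_{[a,b]}=e^\star_ae^\star_{a+1}\cdots e^\star_b$; $\rho_N(B)=e^\star_{[1,L-1]}\cdots e^\star_{[1,1]}(B)$. Let $N^{(k)}$ be the bottom $k$ rows of $e^\star_{[1,k-1]}\cdots e^\star_{[1,1]}(B)$ for $1\le k\le L$, $N^{(0)}$ empty; $\rho_Q(B)$ is the filling (in French notation) whose row $r$ consists of $|N^{(i)}_r|-|N^{(i-1)}_r|$ entries equal to $i$ for each $i=1,\dots,L$ (with $|N^{(i-1)}_i|=0$), written in weakly increasing order. *)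

theory Defs
  imports Main
begin

text \<open>Ball arrangements are represented as functions B :: nat => nat set,
  B r being the set of columns of the balls in row r (rows numbered from 1,
  bottom to tp).  Row 0 and rows above the last row are empty; thus tuples
  differing only by empty tp rows are automatically identified.\<close>

definition MLset :: "nat \<Rightarrow> nat \<Rightarrow> (nat \<Rightarrow> nat set) set" where
  "MLset L n = {B. (\<forall>r. 1 \<le> r \<and> r \<le> L \<longrightarrow> B r \<subseteq> {1..n})
                   \<and> (\<forall>r. (r = 0 \<or> L < r) \<longrightarrow> B r = {})}"

definition is_partition :: "nat list \<Rightarrow> bool" where
  "is_partition mu \<longleftrightarrow> sorted_wrt (\<ge>) mu \<and> 0 \<notin> set mu"

text \<open>Parts of the conjugate partition: conj mu j = mu'_j (for j >= 1).\<close>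
definition conj :: "nat list \<Rightarrow> nat \<Rightarrow> nat" where
  "conj mu j = card {i. i < length mu \<and> j \<le> mu ! i}"

definition first_part :: "nat list \<Rightarrow> nat" where
  "first_part mu = (if mu = [] then 0 else hd mu)"

definition MLQ :: "nat list \<Rightarrow> nat \<Rightarrow> (nat \<Rightarrow> nat set) set" where
  "MLQ mu n = {M. (\<forall>j. 1 \<le> j \<and> j \<le> first_part mu \<longrightarrow>
                        M j \<subseteq> {1..n} \<and> card (M j) = conj mu j)
                 \<and> (\<forall>j. (j = 0 \<or> first_part mu < j) \<longrightarrow> M j = {})}"

text \<open>First column of S weakly to the right of c, cyclically (columns lie in 1..n).\<close>
definition cyc_next :: "nat \<Rightarrow> nat set \<Rightarrow> nat" where
  "cyc_next c S = (if \<exists>x\<in>S. c \<le> x then Min {x\<in>S. c \<le> x} else Min S)"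

text \<open>Pair the balls of row r (given as a list of (column, label) in processing
  order) with balls of row r-1 (column set S); lab is the partial labelling of
  row r-1; acc accumulates the contributions of wrapping pairings.\<close>
fun pair_seq :: "nat \<Rightarrow> nat set \<Rightarrow> (nat \<times> nat) list \<Rightarrow> (nat \<Rightarrow> nat option) \<Rightarrow> nat
                 \<Rightarrow> (nat \<Rightarrow> nat option) \<times> nat" where
  "pair_seq r S [] lab acc = (lab, acc)"
| "pair_seq r S ((c, l) # ps) lab acc =
     (let c' = cyc_next c {x \<in> S. lab x = None}
      in pair_seq r S ps (lab(c' := Some l))
           (if c' < c then acc + (l + 1 - r) else acc))"

text \<open>maj_aux tp M r lab (tp = top row): contributions of rows r, r-1, ..., 2, where lab is the
  labelling of row r obtained so far from the pairings with row r+1.\<close>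
fun maj_aux :: "nat \<Rightarrow> (nat \<Rightarrow> nat set) \<Rightarrow> nat \<Rightarrow> (nat \<Rightarrow> nat option) \<Rightarrow> nat" where
  "maj_aux tp M 0 lab = 0"
| "maj_aux tp M (Suc 0) lab = 0"
| "maj_aux tp M (Suc (Suc k)) lab =
     (let r = Suc (Suc k);
          labr = (\<lambda>c. case lab c of Some l \<Rightarrow> Some l
                                  | None \<Rightarrow> (if c \<in> M r then Some r else None));
          seq = concat (map (\<lambda>l. map (\<lambda>c. (c, l))
                                    (sorted_list_of_set {c \<in> M r. labr c = Some l}))
                           (rev [r..<tp + 1]));
          res = pair_seq r (M (Suc k)) seq (\<lambda>_. None) 0
      in snd res + maj_aux tp M (Suc k) (fst res))"

definition maj :: "nat list \<Rightarrow> (nat \<Rightarrow> nat set) \<Rightarrow> nat" where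
  "maj mu M = maj_aux (first_part mu) M (first_part mu) (\<lambda>_. None)"

definition MLQ0 :: "nat list \<Rightarrow> nat \<Rightarrow> (nat \<Rightarrow> nat set) set" where
  "MLQ0 mu n = {M \<in> MLQ mu n. maj mu M = 0}"

text \<open>Column word, as the list of ball positions (row, column): columns 1..n left
  to right, each read tp (row L) to bottom; the letters are the rows.\<close>
definition cwp :: "nat \<Rightarrow> nat \<Rightarrow> (nat \<Rightarrow> nat set) \<Rightarrow> (nat \<times> nat) list" where
  "cwp L n B = concat (map (\<lambda>j. map (\<lambda>r. (r, j)) (filter (\<lambda>r. j \<in> B r) (rev [1..<L + 1])))
                           [1..<n + 1])"

definition cw :: "nat \<Rightarrow> nat \<Rightarrow> (nat \<Rightarrow> nat set) \<Rightarrow> nat list" where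
  "cw L n B = map fst (cwp L n B)"

text \<open>Parenthesis matching Par_i: letter i+1 is "(", letter i is ")".  Scanning
  left to right, each ")" is matched with the nearest preceding unmatched "("
  (this realises the iterative matching).  The result is the list of positions
  (0-based) of the unmatched "(".\<close>
fun unm :: "nat \<Rightarrow> nat list \<Rightarrow> nat list \<Rightarrow> nat \<Rightarrow> nat list" where
  "unm i st [] k = st"
| "unm i st (x # xs) k =
     (if x = i + 1 then unm i (k # st) xs (k + 1)
      else if x = i then unm i (drop 1 st) xs (k + 1)
      else unm i st xs (k + 1))"

definition unmatched_open :: "nat \<Rightarrow> nat list \<Rightarrow> nat set" where
  "unmatched_open i w = set (unm i [] w 0)"

definition estar :: "nat \<Rightarrow> nat \<Rightarrow> nat \<Rightarrow> (nat \<Rightarrow> nat set) \<Rightarrow> (nat \<Rightarrow> nat set)" where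
  "estar L n i B =
     (let w = cwp L n B;
          Mv = {snd (w ! k) | k. k \<in> unmatched_open i (cw L n B)}
      in B(i + 1 := B (i + 1) - Mv, i := B i \<union> Mv))"

text \<open>estar_seg L n b = e*_{[1,b]} = e*_1 e*_2 ... e*_b (e*_b applied first).\<close>
fun estar_seg :: "nat \<Rightarrow> nat \<Rightarrow> nat \<Rightarrow> (nat \<Rightarrow> nat set) \<Rightarrow> (nat \<Rightarrow> nat set)" where
  "estar_seg L n 0 B = B"
| "estar_seg L n (Suc b) B = estar_seg L n b (estar L n (Suc b) B)"

text \<open>stage L n k B = e*_{[1,k-1]} ... e*_{[1,1]} (B).\<close>
fun stage :: "nat \<Rightarrow> nat \<Rightarrow> nat \<Rightarrow> (nat \<Rightarrow> nat set) \<Rightarrow> (nat \<Rightarrow> nat set)" where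
  "stage L n 0 B = B"
| "stage L n (Suc k) B = estar_seg L n k (stage L n k B)"

definition rhoN :: "nat \<Rightarrow> nat \<Rightarrow> (nat \<Rightarrow> nat set) \<Rightarrow> (nat \<Rightarrow> nat set)" where
  "rhoN L n B = stage L n L B"

text \<open>Number of entries i in row r of rho_Q(B): |N^(i)_r| - |N^(i-1)_r|, where
  N^(k)_r = row r of stage k for r <= k, and |N^(i-1)_i| = 0.  Computed in int.\<close>
definition rhoQ_mult :: "nat \<Rightarrow> nat \<Rightarrow> (nat \<Rightarrow> nat set) \<Rightarrow> nat \<Rightarrow> nat \<Rightarrow> int" where
  "rhoQ_mult L n B r i =
     (if 1 \<le> r \<and> r \<le> i \<and> i \<le> L
      then int (card (stage L n i B r))
           - (if r < i then int (card (stage L n (i - 1) B r)) else 0)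
      else 0)"

definition rhoQ :: "nat \<Rightarrow> nat \<Rightarrow> (nat \<Rightarrow> nat set) \<Rightarrow> nat \<Rightarrow> nat list" where
  "rhoQ L n B r =
     (if 1 \<le> r \<and> r \<le> L
      then concat (map (\<lambda>i. replicate (nat (rhoQ_mult L n B r i)) i) [1..<L + 1])
      else [])"

text \<open>Semistandard Young tableau (French notation) with row lengths sh 1, sh 2, ...:
  positive entries, rows weakly increasing, columns strictly increasing upward.\<close>
definition is_ssyt :: "(nat \<Rightarrow> nat list) \<Rightarrow> (nat \<Rightarrow> nat) \<Rightarrow> bool" where
  "is_ssyt T sh \<longleftrightarrow>
     T 0 = [] \<and>
     (\<forall>r. 1 \<le> r \<longrightarrow> length (T r) = sh r) \<and>
     (\<forall>r. \<forall>x \<in> set (T r). 1 \<le> x) \<and>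
     (\<forall>r. sorted (T r)) \<and>
     (\<forall>r c. 1 \<le> r \<and> c < length (T (r + 1)) \<longrightarrow> T r ! c < T (r + 1) ! c)"

end

theory Submission
  imports Defs
begin

text \<open>The operator e*_i lowers exactly those balls of row i+1 whose column is unmatched against
  row i, a ball of row i+1 being matched with a free ball of row i weakly to its right.
  Comparing the numbers of balls in final segments of columns, the lowered row i+1 is dominated
  by row i, and a row that was dominated by row i stays dominated by the new row i+1.  Hence after
  the k-th stage the rows 1, ..., k form a chain under domination.  For rhoN(B) this says that the
  row lengths decrease, giving the partition mu, and that no pairing of the major index wraps
  around, so maj = 0.  The same bookkeeping gives the inequalities between row lengths of
  consecutive stages that make the multiplicities of rhoQ(B) nonnegative and its columns
  strictly increasing; the content is right because every e*_i preserves the number of balls.\<close>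

section \<open>Parenthesis matching and the operators e*_i\<close>

text \<open>Reading w from right to left and starting from t, close_excess i w t counts the letters i
  (closing parentheses) not matched by a letter i+1; a letter i+1 of a word is unmatched in
  Par_i iff this count vanishes for the suffix following it.\<close>
definition close_excess :: "nat \<Rightarrow> nat list \<Rightarrow> nat \<Rightarrow> nat" where
  "close_excess i w t =
     foldr (\<lambda>x t. if x = Suc i then t - 1 else if x = i then Suc t else t) w t"

lemma close_excess_Nil [simp]: "close_excess i [] t = t"
  by (simp add: close_excess_def)

lemma close_excess_Cons [simp]:
  "close_excess i (x # w) t =
     (if x = Suc i then close_excess i w t - 1 else if x = i then Suc (close_excess i w t)
      else close_excess i w t)"
  by (simp add: close_excess_def)

lemma close_excess_append [simp]:
  "close_excess i (v @ w) t = close_excess i v (close_excess i w t)"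
  by (simp add: close_excess_def)

lemma unm_eq_append_drop: "unm i st w k = unm i [] w k @ drop (close_excess i w 0) st"
proof (induction w arbitrary: st k)
  case Nil
  then show ?case by simp
next
  case (Cons x w)
  show ?case
  proof (cases "x = Suc i")
    case True
    have "drop (close_excess i w 0) (k # st) =
          drop (close_excess i w 0) [k] @ drop (close_excess i w 0 - 1) st"
      by (cases "close_excess i w 0") auto
    then show ?thesis
      using True Cons[of "k # st"] Cons[of "[k]"] by simp
  next
    case False
    then show ?thesis
      using Cons[of "drop 1 st"] Cons[of st] by (auto simp: add.commute)
  qed
qed

lemma mem_unm_Nil_iff:
  "m \<in> set (unm i [] w k) \<longleftrightarrow>
     k \<le> m \<and> m - k < length w \<and> w ! (m - k) = Suc i
     \<and> close_excess i (drop (Suc (m - k)) w) 0 = 0"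
proof (induction w arbitrary: k)
  case Nil
  then show ?case by simp
next
  case (Cons x w)
  have unm_Cons: "unm i [] (x # w) k =
      (if x = Suc i then unm i [] w (k + 1) @ drop (close_excess i w 0) [k]
       else unm i [] w (k + 1))"
    using unm_eq_append_drop[of i "[k]" w "k + 1"] by auto
  show ?case
  proof (cases "m = k")
    case True
    then show ?thesis
      unfolding unm_Cons using Cons[of "k + 1"] by (cases "close_excess i w 0") auto
  next
    case False
    then have "k \<le> m \<longleftrightarrow> Suc k \<le> m" and "Suc k \<le> m \<Longrightarrow> m - k = Suc (m - Suc k)"
      by auto
    then show ?thesis
      unfolding unm_Cons using Cons[of "k + 1"] False
      by (cases "close_excess i w 0") (auto simp: nth_Cons split: nat.splits)
  qed
qed

definition word_unmatched :: "nat \<Rightarrow> nat \<Rightarrow> (nat \<times> nat) list \<Rightarrow> nat set" where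
  "word_unmatched i t w =
     {snd (w ! j) | j. j < length w \<and> fst (w ! j) = Suc i
                       \<and> close_excess i (map fst (drop (Suc j) w)) t = 0}"

lemma word_unmatched_Nil [simp]: "word_unmatched i t [] = {}"
  by (simp add: word_unmatched_def)

lemma word_unmatched_Cons:
  "word_unmatched i t (x # w) =
     (if fst x = Suc i \<and> close_excess i (map fst w) t = 0 then {snd x} else {})
     \<union> word_unmatched i t w" (is "?lhs = ?rhs")
proof
  show "?lhs \<subseteq> ?rhs"
    unfolding word_unmatched_def by (auto simp: nth_Cons split: nat.splits dest!: gr0_implies_Suc)
next
  have "snd x \<in> ?lhs" if "fst x = Suc i" "close_excess i (map fst w) t = 0"
    using that unfolding word_unmatched_def by (intro CollectI exI[of _ 0]) auto
  moreover have "y \<in> ?lhs" if y: "y \<in> word_unmatched i t w" for y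
  proof -
    obtain j where "y = snd (w ! j)" "j < length w" "fst (w ! j) = Suc i"
      "close_excess i (map fst (drop (Suc j) w)) t = 0"
      using y unfolding word_unmatched_def by blast
    then show ?thesis
      unfolding word_unmatched_def by (intro CollectI exI[of _ "Suc j"]) auto
  qed
  ultimately show "?rhs \<subseteq> ?lhs" by auto
qed

lemma word_unmatched_append:
  "word_unmatched i t (v @ w) =
     word_unmatched i (close_excess i (map fst w) t) v \<union> word_unmatched i t w"
  by (induction v) (auto simp: word_unmatched_Cons)

lemma estar_moved_eq_word_unmatched:
  "{snd (cwp L n B ! k) | k. k \<in> unmatched_open i (cw L n B)} = word_unmatched i 0 (cwp L n B)"
  unfolding unmatched_open_def cw_def word_unmatched_def mem_unm_Nil_iff
  by (auto simp: drop_map)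

definition col_word :: "nat \<Rightarrow> (nat \<Rightarrow> nat set) \<Rightarrow> nat \<Rightarrow> (nat \<times> nat) list" where
  "col_word m B c = map (\<lambda>r. (r, c)) (filter (\<lambda>r. c \<in> B r) (rev [1..<m + 1]))"

lemma col_word_0 [simp]: "col_word 0 B c = []"
  by (simp add: col_word_def)

lemma col_word_Suc:
  "col_word (Suc m) B c = (if c \<in> B (Suc m) then [(Suc m, c)] else []) @ col_word m B c"
  by (simp add: col_word_def)

lemma cwp_eq_concat_col_word: "cwp L n B = concat (map (col_word L B) [1..<n + 1])"
  unfolding cwp_def col_word_def ..

lemma close_excess_col_word:
  assumes "1 \<le> i"
  shows "close_excess i (map fst (col_word m B c)) t =
     (if Suc i \<le> m then (t + of_bool (c \<in> B i)) - of_bool (c \<in> B (Suc i))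
      else if i \<le> m then t + of_bool (c \<in> B i) else t)"
proof (induction m)
  case 0
  then show ?case using assms by simp
next
  case (Suc m)
  consider "m = i" | "Suc m = i" | "m \<noteq> i" "Suc m \<noteq> i"
    by blast
  then show ?case
  proof cases
    case 3
    then have "(Suc i \<le> Suc m) = (Suc i \<le> m)" "(i \<le> Suc m) = (i \<le> m)"
      by auto
    then show ?thesis
      using Suc 3 by (auto simp: col_word_Suc)
  qed (use Suc in \<open>auto simp: col_word_Suc\<close>)
qed

lemma word_unmatched_col_word:
  assumes "1 \<le> i"
  shows "word_unmatched i t (col_word m B c) =
     (if Suc i \<le> m \<and> c \<in> B (Suc i) \<and> c \<notin> B i \<and> t = 0 then {c} else {})"
proof (induction m)
  case 0
  then show ?case by simp
next
  case (Suc m)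
  show ?case
  proof (cases "m = i")
    case True
    then show ?thesis
      using Suc assms by (auto simp: col_word_Suc word_unmatched_Cons close_excess_col_word)
  next
    case False
    then have "word_unmatched i t (col_word (Suc m) B c) = word_unmatched i t (col_word m B c)"
      by (auto simp: col_word_Suc word_unmatched_Cons)
    moreover have "Suc i \<le> Suc m \<longleftrightarrow> Suc i \<le> m"
      using False by auto
    ultimately show ?thesis
      using Suc by simp
  qed
qed

text \<open>The same count for an upper row U and a lower row D read column by column: excess U D n c
  is the number of balls of D in the columns c, ..., n not matched by a ball of U there.\<close>
definition excess :: "nat set \<Rightarrow> nat set \<Rightarrow> nat \<Rightarrow> nat \<Rightarrow> nat" where
  "excess U D n c = foldr (\<lambda>x t. (t + of_bool (x \<in> D)) - of_bool (x \<in> U)) [c..<Suc n] 0"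

definition unmatched :: "nat set \<Rightarrow> nat set \<Rightarrow> nat \<Rightarrow> nat set" where
  "unmatched U D n = {c. c \<le> n \<and> c \<in> U \<and> c \<notin> D \<and> excess U D n (Suc c) = 0}"

lemma excess_beyond: "n < c \<Longrightarrow> excess U D n c = 0"
  by (simp add: excess_def)

lemma excess_step:
  "c \<le> n \<Longrightarrow> excess U D n c = (excess U D n (Suc c) + of_bool (c \<in> D)) - of_bool (c \<in> U)"
  by (simp add: excess_def upt_conv_Cons del: upt_Suc)

lemma unmatched_subset: "unmatched U D n \<subseteq> U"
  by (auto simp: unmatched_def)

lemma unmatched_disjoint: "unmatched U D n \<inter> D = {}"
  by (auto simp: unmatched_def)

lemma unmatched_atMost: "unmatched U D n \<subseteq> {..n}"
  by (auto simp: unmatched_def)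

lemma close_excess_concat_col_word:
  assumes "1 \<le> i" "Suc i \<le> L"
  shows "close_excess i (map fst (concat (map (col_word L B) cs))) t =
     foldr (\<lambda>x t. (t + of_bool (x \<in> B i)) - of_bool (x \<in> B (Suc i))) cs t"
  by (induction cs) (use assms in \<open>auto simp: close_excess_col_word\<close>)

lemma word_unmatched_concat_col_word:
  assumes "1 \<le> i" "Suc i \<le> L" "a \<le> Suc n"
  shows "word_unmatched i 0 (concat (map (col_word L B) [a..<Suc n])) =
     {c \<in> unmatched (B (Suc i)) (B i) n. a \<le> c}"
  using assms(3)
proof (induction a rule: inc_induct)
  case base
  then show ?case by (auto simp: unmatched_def)
next
  case (step a)
  have "[a..<Suc n] = a # [Suc a..<Suc n]"
    using step by (simp add: upt_conv_Cons)
  moreover have "close_excess i (map fst (concat (map (col_word L B) [Suc a..<Suc n]))) 0 =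
      excess (B (Suc i)) (B i) n (Suc a)"
    using close_excess_concat_col_word[OF assms(1,2)] by (simp add: excess_def)
  ultimately have "word_unmatched i 0 (concat (map (col_word L B) [a..<Suc n])) =
      (if a \<in> B (Suc i) \<and> a \<notin> B i \<and> excess (B (Suc i)) (B i) n (Suc a) = 0 then {a} else {})
      \<union> {c \<in> unmatched (B (Suc i)) (B i) n. Suc a \<le> c}"
    using step assms by (simp add: word_unmatched_append word_unmatched_col_word)
  also have "\<dots> = {c \<in> unmatched (B (Suc i)) (B i) n. a \<le> c}"
    using step(2) by (auto simp: unmatched_def le_eq_less_or_eq)
  finally show ?case .
qed

lemma MLset_row_subset:
  assumes "B \<in> MLset L n"
  shows "B r \<subseteq> {1..n}"
proof (cases "r = 0 \<or> L < r")
  case True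
  then show ?thesis
    using assms unfolding MLset_def by blast
next
  case False
  then have "1 \<le> r \<and> r \<le> L"
    by simp
  then show ?thesis
    using assms unfolding MLset_def by blast
qed

lemma MLset_finite_row: "B \<in> MLset L n \<Longrightarrow> finite (B r)"
  by (meson MLset_row_subset finite_atLeastAtMost finite_subset)

lemma estar_eq_unmatched:
  assumes B: "B \<in> MLset L n" and i: "1 \<le> i" "i < L"
  shows "estar L n i B = B(Suc i := B (Suc i) - unmatched (B (Suc i)) (B i) n,
                           i := B i \<union> unmatched (B (Suc i)) (B i) n)"
proof -
  have "unmatched (B (Suc i)) (B i) n \<subseteq> {1..n}"
    using unmatched_subset MLset_row_subset[OF B] by blast
  then have "word_unmatched i 0 (cwp L n B) = unmatched (B (Suc i)) (B i) n"
    unfolding cwp_eq_concat_col_word using word_unmatched_concat_col_word[of i L 1 n B] i by auto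
  then show ?thesis
    unfolding estar_def Let_def estar_moved_eq_word_unmatched by simp
qed

lemma estar_in_MLset:
  assumes B: "B \<in> MLset L n" and i: "1 \<le> i" "i < L"
  shows "estar L n i B \<in> MLset L n"
proof -
  have "unmatched (B (Suc i)) (B i) n \<subseteq> {1..n}"
    using unmatched_subset MLset_row_subset[OF B] by blast
  moreover have "B r \<subseteq> {1..n}" for r
    using MLset_row_subset[OF B] .
  moreover have "B r = {}" if "r = 0 \<or> L < r" for r
    using B that unfolding MLset_def by blast
  ultimately show ?thesis
    using i unfolding estar_eq_unmatched[OF B i] MLset_def by auto
qed

section \<open>Domination of rows\<close>

definition tail_card :: "nat set \<Rightarrow> nat \<Rightarrow> nat" where
  "tail_card S c = card {x \<in> S. c \<le> x}"

text \<open>For two rows of a ball arrangement this is the condition under which every ball of S can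
  be paired with a ball of T weakly to its right without wrapping around.\<close>
definition tail_dominated :: "nat set \<Rightarrow> nat set \<Rightarrow> bool" where
  "tail_dominated S T \<longleftrightarrow> (\<forall>c. tail_card S c \<le> tail_card T c)"

lemma tail_card_0 [simp]: "tail_card S 0 = card S"
  by (simp add: tail_card_def)

lemma tail_dominated_card_le: "tail_dominated S T \<Longrightarrow> card S \<le> card T"
  unfolding tail_dominated_def by (metis tail_card_0)

lemma tail_dominated_trans:
  "tail_dominated S T \<Longrightarrow> tail_dominated T U \<Longrightarrow> tail_dominated S U"
  unfolding tail_dominated_def using le_trans by blast

lemma tail_card_Suc: "finite S \<Longrightarrow> tail_card S c = tail_card S (Suc c) + of_bool (c \<in> S)"
proof -
  assume "finite S"
  moreover have "{x \<in> S. c \<le> x} =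
      (if c \<in> S then insert c {x \<in> S. Suc c \<le> x} else {x \<in> S. Suc c \<le> x})"
    by (auto simp: le_eq_less_or_eq)
  ultimately show ?thesis
    by (simp add: tail_card_def)
qed

lemma tail_card_mono: "finite T \<Longrightarrow> S \<subseteq> T \<Longrightarrow> tail_card S c \<le> tail_card T c"
  unfolding tail_card_def by (rule card_mono) auto

lemma tail_card_antimono: "finite S \<Longrightarrow> c \<le> d \<Longrightarrow> tail_card S d \<le> tail_card S c"
  unfolding tail_card_def by (rule card_mono) auto

lemma tail_card_beyond: "S \<subseteq> {..n} \<Longrightarrow> n < c \<Longrightarrow> tail_card S c = 0"
  unfolding tail_card_def by (auto simp: card_eq_0_iff)

lemma tail_card_diff:
  assumes "finite S" "Y \<subseteq> S"
  shows "tail_card (S - Y) c = tail_card S c - tail_card Y c"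
proof -
  have "{x \<in> S - Y. c \<le> x} = {x \<in> S. c \<le> x} - {x \<in> Y. c \<le> x}"
    by auto
  moreover have "{x \<in> Y. c \<le> x} \<subseteq> {x \<in> S. c \<le> x}"
    using assms by auto
  ultimately show ?thesis
    using assms by (simp add: tail_card_def card_Diff_subset finite_subset)
qed

lemma tail_card_split:
  "finite S \<Longrightarrow> Y \<subseteq> S \<Longrightarrow> tail_card S c = tail_card Y c + tail_card (S - Y) c"
  using tail_card_diff[of S Y c] tail_card_mono[of S Y c] by simp

lemma tail_card_remove:
  "finite S \<Longrightarrow> tail_card (S - {s}) c = tail_card S c - of_bool (s \<in> S \<and> c \<le> s)"
proof -
  assume "finite S"
  moreover have "{x \<in> S - {s}. c \<le> x} = {x \<in> S. c \<le> x} - {s}"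
    by auto
  ultimately show ?thesis
    by (auto simp: tail_card_def card_Diff_singleton_if)
qed

lemma tail_card_pos: "finite S \<Longrightarrow> c \<in> S \<Longrightarrow> 0 < tail_card S c"
  unfolding tail_card_def by (subst card_gt_0_iff) auto

text \<open>Within the columns c, ..., n the matched pairs cancel.\<close>
lemma tail_card_unmatched_diff:
  assumes U: "U \<subseteq> {..n}" and D: "D \<subseteq> {..n}"
  shows "int (tail_card (unmatched U D n) c) - int (excess U D n c) =
         int (tail_card U c) - int (tail_card D c)"
proof (cases "c \<le> Suc n")
  case False
  then show ?thesis
    using U D unmatched_atMost[of U D n] by (simp add: tail_card_beyond excess_beyond)
next
  case True
  then show ?thesis
  proof (induction c rule: inc_induct)
    case base
    then show ?case
      using U D unmatched_atMost[of U D n] by (simp add: tail_card_beyond excess_beyond)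
  next
    case (step c)
    have fin: "finite U" "finite D" "finite (unmatched U D n)"
      using U D unmatched_atMost[of U D n] by (auto intro: finite_subset)
    have cn: "c \<le> n"
      using step by auto
    then have "c \<in> unmatched U D n \<longleftrightarrow> c \<in> U \<and> c \<notin> D \<and> excess U D n (Suc c) = 0"
      by (simp add: unmatched_def)
    then show ?case
      using step.IH tail_card_Suc[OF fin(1), of c] tail_card_Suc[OF fin(2), of c]
        tail_card_Suc[OF fin(3), of c] excess_step[OF cn, of U D]
      by (cases "c \<in> U"; cases "c \<in> D"; cases "excess U D n (Suc c) = 0") simp_all
  qed
qed

lemma tail_card_le_unmatched:
  "U \<subseteq> {..n} \<Longrightarrow> D \<subseteq> {..n} \<Longrightarrow> tail_card U c \<le> tail_card D c + tail_card (unmatched U D n) c"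
  using tail_card_unmatched_diff[of U n D c] by linarith

lemma tail_card_unmatched_le:
  assumes U: "U \<subseteq> {..n}" and D: "D \<subseteq> {..n}"
    and bound: "\<And>c'. c \<le> c' \<Longrightarrow> int (tail_card U c') - int (tail_card D c') \<le> int (g c')"
    and antimono: "\<And>x y. c \<le> x \<Longrightarrow> x \<le> y \<Longrightarrow> g y \<le> g x"
  shows "tail_card (unmatched U D n) c \<le> g c"
proof (cases "c \<le> Suc n")
  case False
  then show ?thesis
    using unmatched_atMost[of U D n] by (simp add: tail_card_beyond)
next
  case True
  then show ?thesis
    using bound antimono
  proof (induction c rule: inc_induct)
    case base
    then show ?case
      using unmatched_atMost[of U D n] by (simp add: tail_card_beyond)
  next
    case (step c)
    have cn: "c \<le> n"
      using step by auto
    show ?case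
    proof (cases "c \<in> unmatched U D n")
      case True
      then have "excess U D n c = 0"
        using excess_step[OF cn, of U D] by (simp add: unmatched_def)
      then show ?thesis
        using tail_card_unmatched_diff[OF U D, of c] step.prems(1)[of c] by simp
    next
      case False
      have "finite (unmatched U D n)"
        using unmatched_atMost[of U D n] by (auto intro: finite_subset)
      then have "tail_card (unmatched U D n) c = tail_card (unmatched U D n) (Suc c)"
        using False tail_card_Suc[of _ c] by simp
      moreover have "tail_card (unmatched U D n) (Suc c) \<le> g (Suc c)"
        using step.IH step.prems by simp
      moreover have "g (Suc c) \<le> g c"
        using step.prems(2)[of c "Suc c"] by simp
      ultimately show ?thesis
        by linarith
    qed
  qed
qed

lemma tail_dominated_diff_unmatched:
  assumes U: "U \<subseteq> {..n}" and D: "D \<subseteq> {..n}"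
  shows "tail_dominated (U - unmatched U D n) D"
  unfolding tail_dominated_def
proof
  fix c
  have "finite U"
    using U by (rule finite_subset) simp
  then show "tail_card (U - unmatched U D n) c \<le> tail_card D c"
    using tail_card_le_unmatched[OF U D, of c] tail_card_diff[OF _ unmatched_subset, of U D n c]
    by linarith
qed

lemma tail_dominated_le_diff_unmatched:
  assumes U: "U \<subseteq> {..n}" and D: "D \<subseteq> {..n}" and V: "V \<subseteq> U" "tail_dominated V D"
  shows "tail_dominated V (U - unmatched U D n)"
  unfolding tail_dominated_def
proof
  fix c
  have fin: "finite U"
    using U by (rule finite_subset) simp
  have "tail_card (unmatched U D n) c \<le> tail_card (U - V) c"
  proof (rule tail_card_unmatched_le[OF U D])
    fix c'
    have "tail_card V c' \<le> tail_card D c'"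
      using V(2) unfolding tail_dominated_def by blast
    then show "int (tail_card U c') - int (tail_card D c') \<le> int (tail_card (U - V) c')"
      using tail_card_split[OF fin V(1), of c'] by linarith
  next
    fix x y :: nat
    assume "x \<le> y"
    then show "tail_card (U - V) y \<le> tail_card (U - V) x"
      using fin by (intro tail_card_antimono) auto
  qed
  then show "tail_card V c \<le> tail_card (U - unmatched U D n) c"
    using tail_card_split[OF fin V(1), of c]
      tail_card_diff[OF fin unmatched_subset[of U D n], where c = c]
      tail_card_mono[OF fin unmatched_subset[of U D n], where c = c]
    by linarith
qed

section \<open>The stages of the collapsing\<close>

text \<open>Invariant of the computation of e*_1 e*_2 ... e*_(K-1) N: E arises from N by applying
  e*_(K-1), ..., e*_(l+1).\<close>
definition seg_inv ::
  "nat \<Rightarrow> nat \<Rightarrow> (nat \<Rightarrow> nat set) \<Rightarrow> nat \<Rightarrow> nat \<Rightarrow> (nat \<Rightarrow> nat set) \<Rightarrow> bool" where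
  "seg_inv L n N K l E \<longleftrightarrow>
     E \<in> MLset L n \<and> (\<forall>r. r \<le> l \<or> K < r \<longrightarrow> E r = N r) \<and> N (Suc l) \<subseteq> E (Suc l)
     \<and> (\<forall>r. Suc (Suc l) \<le> r \<and> r \<le> K \<longrightarrow> tail_dominated (E r) (N (r - 1)))
     \<and> (\<forall>r. Suc (Suc (Suc l)) \<le> r \<and> r \<le> K \<longrightarrow> tail_dominated (E r) (E (r - 1)))
     \<and> (\<forall>r. Suc (Suc l) \<le> r \<and> r < K \<longrightarrow> card (N r) \<le> card (E r))"

lemma seg_inv_init: "N \<in> MLset L n \<Longrightarrow> seg_inv L n N (Suc k) k N"
  unfolding seg_inv_def by auto

lemma seg_inv_step:
  assumes I: "seg_inv L n N (Suc k) (Suc l) E" and lk: "Suc l \<le> k"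
    and E': "E' \<in> MLset L n" "E' = E(Suc (Suc l) := U', Suc l := E (Suc l) \<union> Y)"
    and new_row: "tail_dominated U' (N (Suc l))"
    and old_row: "Suc (Suc l) \<le> k \<Longrightarrow> tail_dominated (N (Suc (Suc l))) U'"
  shows "seg_inv L n N (Suc k) l E'"
proof -
  have "\<forall>r. r \<le> l \<or> Suc k < r \<longrightarrow> E' r = N r"
    using I lk unfolding E'(2) seg_inv_def by auto
  moreover have "N (Suc l) \<subseteq> E' (Suc l)"
    using I unfolding E'(2) seg_inv_def by auto
  moreover have "\<forall>r. Suc (Suc l) \<le> r \<and> r \<le> Suc k \<longrightarrow> tail_dominated (E' r) (N (r - 1))"
    using I new_row unfolding E'(2) seg_inv_def by auto
  moreover have "tail_dominated (E' r) (E' (r - 1))"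
    if r: "Suc (Suc (Suc l)) \<le> r" "r \<le> Suc k" for r
  proof (cases "r = Suc (Suc (Suc l))")
    case True
    then have "tail_dominated (E r) (N (Suc (Suc l)))"
      using I r unfolding seg_inv_def by auto
    then show ?thesis
      using True r old_row tail_dominated_trans unfolding E'(2) by auto
  next
    case False
    then show ?thesis
      using I r unfolding E'(2) seg_inv_def by auto
  qed
  moreover have "\<forall>r. Suc (Suc l) \<le> r \<and> r < Suc k \<longrightarrow> card (N r) \<le> card (E' r)"
    using I old_row tail_dominated_card_le unfolding E'(2) seg_inv_def by auto
  ultimately show ?thesis
    using E'(1) unfolding seg_inv_def by blast
qed

lemma seg_inv_estar:
  assumes N: "N \<in> MLset L n"
    and chain: "\<forall>r. 2 \<le> r \<and> r \<le> k \<longrightarrow> tail_dominated (N r) (N (r - 1))"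
    and kL: "Suc k \<le> L" and lk: "Suc l \<le> k" and I: "seg_inv L n N (Suc k) (Suc l) E"
  shows "seg_inv L n N (Suc k) l (estar L n (Suc l) E)"
proof -
  define i where "i = Suc l"
  define U where "U = E (Suc i)"
  define D where "D = E i"
  have E: "E \<in> MLset L n" and D_eq: "D = N i" and NU: "N (Suc i) \<subseteq> U"
    using I by (simp_all add: seg_inv_def D_def U_def i_def)
  have i: "1 \<le> i" "i < L"
    using lk kL by (auto simp: i_def)
  have U: "U \<subseteq> {..n}" and D: "D \<subseteq> {..n}"
    unfolding U_def D_def using MLset_row_subset[OF E] by fastforce+
  show ?thesis
  proof (rule seg_inv_step[OF I lk])
    show "estar L n (Suc l) E \<in> MLset L n"
      using estar_in_MLset[OF E i] by (simp add: i_def)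
    show "estar L n (Suc l) E =
        E(Suc (Suc l) := U - unmatched U D n, Suc l := E (Suc l) \<union> unmatched U D n)"
      using estar_eq_unmatched[OF E i] by (simp add: U_def D_def i_def)
    show "tail_dominated (U - unmatched U D n) (N (Suc l))"
      using tail_dominated_diff_unmatched[OF U D] D_eq by (simp add: i_def)
    assume "Suc (Suc l) \<le> k"
    then have "tail_dominated (N (Suc i)) D"
      using chain[rule_format, of "Suc i"] i D_eq by (simp add: i_def)
    then show "tail_dominated (N (Suc (Suc l))) (U - unmatched U D n)"
      using tail_dominated_le_diff_unmatched[OF U D NU] by (simp add: i_def)
  qed
qed

lemma seg_inv_estar_seg:
  assumes N: "N \<in> MLset L n"
    and chain: "\<forall>r. 2 \<le> r \<and> r \<le> k \<longrightarrow> tail_dominated (N r) (N (r - 1))"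
    and kL: "Suc k \<le> L"
  shows "l \<le> k \<Longrightarrow> seg_inv L n N (Suc k) l E \<Longrightarrow> seg_inv L n N (Suc k) 0 (estar_seg L n l E)"
proof (induction l arbitrary: E)
  case 0
  then show ?case by simp
next
  case (Suc l)
  then show ?case
    using seg_inv_estar[OF N chain kL] by simp
qed

definition stage_inv :: "nat \<Rightarrow> nat \<Rightarrow> (nat \<Rightarrow> nat set) \<Rightarrow> nat \<Rightarrow> (nat \<Rightarrow> nat set) \<Rightarrow> bool" where
  "stage_inv L n B k N \<longleftrightarrow> N \<in> MLset L n \<and> (\<forall>r. k < r \<longrightarrow> N r = B r)
      \<and> (\<forall>r. 2 \<le> r \<and> r \<le> k \<longrightarrow> tail_dominated (N r) (N (r - 1)))"

lemma seg_inv_estar_seg_stage_inv: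
  assumes "stage_inv L n B k N" "Suc k \<le> L"
  shows "seg_inv L n N (Suc k) 0 (estar_seg L n k N)"
  using assms seg_inv_estar_seg[OF _ _ _ le_refl seg_inv_init] by (simp add: stage_inv_def)

lemma stage_inv_Suc:
  assumes S: "stage_inv L n B k N" and kL: "Suc k \<le> L"
  shows "stage_inv L n B (Suc k) (estar_seg L n k N)"
proof -
  define E where "E = estar_seg L n k N"
  have I: "seg_inv L n N (Suc k) 0 E"
    unfolding E_def using seg_inv_estar_seg_stage_inv[OF S kL] .
  have E: "E \<in> MLset L n" and E1: "N 1 \<subseteq> E 1"
    using I by (simp_all add: seg_inv_def)
  have "tail_dominated (E r) (E (r - 1))" if r: "2 \<le> r" "r \<le> Suc k" for r
  proof (cases "r = 2")
    case True
    have "tail_dominated (E 2) (N 1)"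
      using I r True unfolding seg_inv_def by (auto simp: numeral_2_eq_2)
    moreover have "tail_dominated (N 1) (E 1)"
      unfolding tail_dominated_def using tail_card_mono[OF MLset_finite_row[OF E] E1] by blast
    ultimately show ?thesis
      using True tail_dominated_trans by simp
  next
    case False
    then show ?thesis
      using I r unfolding seg_inv_def by auto
  qed
  moreover have "\<forall>r. Suc k < r \<longrightarrow> E r = B r"
    using I S by (simp add: seg_inv_def stage_inv_def)
  ultimately show ?thesis
    using E unfolding E_def stage_inv_def by blast
qed

lemma stage_inv_stage: "B \<in> MLset L n \<Longrightarrow> k \<le> L \<Longrightarrow> stage_inv L n B k (stage L n k B)"
proof (induction k)
  case 0
  then show ?case by (simp add: stage_inv_def)
next
  case (Suc k)
  then show ?case
    using stage_inv_Suc by simp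
qed

lemma stage_in_MLset: "B \<in> MLset L n \<Longrightarrow> k \<le> L \<Longrightarrow> stage L n k B \<in> MLset L n"
  using stage_inv_stage by (simp add: stage_inv_def)

lemma card_stage_Suc_le:
  assumes B: "B \<in> MLset L n" and kL: "Suc k \<le> L" and r: "2 \<le> r" "r \<le> Suc k"
  shows "card (stage L n (Suc k) B r) \<le> card (stage L n k B (r - 1))"
proof -
  have "seg_inv L n (stage L n k B) (Suc k) 0 (stage L n (Suc k) B)"
    using seg_inv_estar_seg_stage_inv[OF stage_inv_stage[OF B] kL] kL by simp
  then have "tail_dominated (stage L n (Suc k) B r) (stage L n k B (r - 1))"
    using r unfolding seg_inv_def by (auto simp: numeral_2_eq_2)
  then show ?thesis
    by (rule tail_dominated_card_le)
qed

lemma card_stage_le_Suc: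
  assumes B: "B \<in> MLset L n" and kL: "Suc k \<le> L" and r: "1 \<le> r" "r \<le> k"
  shows "card (stage L n k B r) \<le> card (stage L n (Suc k) B r)"
proof -
  have I: "seg_inv L n (stage L n k B) (Suc k) 0 (stage L n (Suc k) B)"
    using seg_inv_estar_seg_stage_inv[OF stage_inv_stage[OF B] kL] kL by simp
  show ?thesis
  proof (cases "r = 1")
    case True
    have "stage L n k B 1 \<subseteq> stage L n (Suc k) B 1"
      using I by (simp add: seg_inv_def)
    then show ?thesis
      using True MLset_finite_row[OF stage_in_MLset[OF B kL]] by (simp add: card_mono)
  next
    case False
    then show ?thesis
      using I r unfolding seg_inv_def by auto
  qed
qed

section \<open>Conservation of balls\<close>

lemma sum_eq_if_eq_off_two_points:
  fixes f g :: "'a \<Rightarrow> 'b::comm_monoid_add"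
  assumes "finite A" "a \<in> A" "b \<in> A" "a \<noteq> b"
    and "\<And>x. x \<in> A \<Longrightarrow> x \<noteq> a \<Longrightarrow> x \<noteq> b \<Longrightarrow> f x = g x"
    and "f a + f b = g a + g b"
  shows "sum f A = sum g A"
proof -
  have split: "sum h A = h a + h b + sum h (A - {a} - {b})" for h :: "'a \<Rightarrow> 'b"
    using assms(1-4) sum.remove[of A a h] sum.remove[of "A - {a}" b h] by (simp add: add.assoc)
  have "sum f (A - {a} - {b}) = sum g (A - {a} - {b})"
    using assms(5) by (intro sum.cong) auto
  then show ?thesis
    using split[of f] split[of g] assms(6) by simp
qed

lemma sum_card_estar:
  assumes E: "E \<in> MLset L n" and i: "1 \<le> i" "i < L" and m: "Suc i \<le> m"
  shows "(\<Sum>r\<in>{1..m}. card (estar L n i E r)) = (\<Sum>r\<in>{1..m}. card (E r))"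
proof (rule sum_eq_if_eq_off_two_points[where a = i and b = "Suc i"])
  define Y where "Y = unmatched (E (Suc i)) (E i) n"
  have E': "estar L n i E = E(Suc i := E (Suc i) - Y, i := E i \<union> Y)"
    unfolding Y_def by (rule estar_eq_unmatched[OF E i])
  have fin: "finite (E r)" for r
    using MLset_finite_row[OF E] .
  have Y: "Y \<subseteq> E (Suc i)" "Y \<inter> E i = {}"
    unfolding Y_def by (rule unmatched_subset, rule unmatched_disjoint)
  have "finite Y"
    using finite_subset[OF Y(1) fin] .
  then show "card (estar L n i E i) + card (estar L n i E (Suc i)) = card (E i) + card (E (Suc i))"
    unfolding E' using Y fin card_mono[OF fin Y(1)]
    by (simp add: card_Un_disjoint card_Diff_subset Int_commute)
qed (use i m in \<open>auto simp: estar_eq_unmatched[OF E i]\<close>)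

lemma sum_card_estar_seg:
  "E \<in> MLset L n \<Longrightarrow> b < L \<Longrightarrow> Suc b \<le> m \<Longrightarrow>
   (\<Sum>r\<in>{1..m}. card (estar_seg L n b E r)) = (\<Sum>r\<in>{1..m}. card (E r))"
proof (induction b arbitrary: E)
  case 0
  then show ?case by simp
next
  case (Suc b)
  then show ?case
    using estar_in_MLset[of E L n "Suc b"] sum_card_estar[of E L n "Suc b" m] by simp
qed

lemma sum_card_stage:
  "B \<in> MLset L n \<Longrightarrow> k \<le> L \<Longrightarrow> k \<le> m \<Longrightarrow>
   (\<Sum>r\<in>{1..m}. card (stage L n k B r)) = (\<Sum>r\<in>{1..m}. card (B r))"
proof (induction k)
  case 0
  then show ?case by simp
next
  case (Suc k)
  then show ?case
    using sum_card_estar_seg[OF stage_in_MLset, of B L n k k m] by simp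
qed

section \<open>Vanishing of the major index\<close>

text \<open>One step of the pairing in the major index preserves domination.\<close>
lemma tail_dominated_remove_pair:
  assumes fin: "finite P" "finite F" and c: "c \<in> P" and s: "s \<in> F" "c \<le> s"
    and s_min: "\<forall>x\<in>F. c \<le> x \<longrightarrow> s \<le> x" and dom: "tail_dominated P F"
  shows "tail_dominated (P - {c}) (F - {s})"
  unfolding tail_dominated_def
proof
  fix c0
  have P_c0: "tail_card (P - {c}) c0 = tail_card P c0 - of_bool (c0 \<le> c)"
    using tail_card_remove[OF fin(1)] c by simp
  have F_c0: "tail_card (F - {s}) c0 = tail_card F c0 - of_bool (c0 \<le> s)"
    using tail_card_remove[OF fin(2)] s by simp
  have le: "tail_card P x \<le> tail_card F x" for x
    using dom unfolding tail_dominated_def by blast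
  consider "c0 \<le> c" | "s < c0" | "c < c0" "c0 \<le> s"
    by linarith
  then show "tail_card (P - {c}) c0 \<le> tail_card (F - {s}) c0"
  proof cases
    case 1
    then show ?thesis
      using P_c0 F_c0 le[of c0] s(2) by simp
  next
    case 2
    then show ?thesis
      using P_c0 F_c0 le[of c0] s(2) by simp
  next
    case 3
    have "{x \<in> F. c \<le> x} = {x \<in> F. c0 \<le> x}"
      using 3 s_min by force
    then have "tail_card F c0 = tail_card F c"
      by (simp add: tail_card_def)
    moreover have "tail_card P c0 \<le> tail_card P (Suc c)"
      using 3 fin(1) by (intro tail_card_antimono) auto
    moreover have "tail_card P c = Suc (tail_card P (Suc c))"
      using tail_card_Suc[OF fin(1), of c] c by simp
    ultimately show ?thesis
      using P_c0 F_c0 le[of c] 3 by simp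
  qed
qed

lemma pair_seq_no_wrap:
  "finite S \<Longrightarrow> distinct (map fst ps) \<Longrightarrow> tail_dominated (fst ` set ps) {x \<in> S. lab x = None}
   \<Longrightarrow> snd (pair_seq r S ps lab acc) = acc"
proof (induction ps arbitrary: lab)
  case Nil
  then show ?case by simp
next
  case (Cons p ps)
  obtain c l where p: "p = (c, l)"
    by (cases p)
  define F where "F = {x \<in> S. lab x = None}"
  define s where "s = Min {x \<in> F. c \<le> x}"
  have fin: "finite (fst ` set (p # ps))" "finite F" "finite {x \<in> F. c \<le> x}"
    using Cons.prems(1) by (simp_all add: F_def)
  have c: "c \<in> fst ` set (p # ps)"
    by (simp add: p)
  have dom: "tail_dominated (fst ` set (p # ps)) F"
    using Cons.prems(3) by (simp add: F_def)
  have "0 < tail_card F c"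
    using tail_card_pos[OF fin(1) c] dom unfolding tail_dominated_def by (meson less_le_trans)
  then have ne: "{x \<in> F. c \<le> x} \<noteq> {}"
    unfolding tail_card_def by (metis card.empty less_irrefl)
  then have s: "s \<in> F" "c \<le> s" and s_min: "\<forall>x\<in>F. c \<le> x \<longrightarrow> s \<le> x"
    using Min_in[OF fin(3) ne] fin(3) by (auto simp: s_def)
  have next_s: "cyc_next c F = s"
    unfolding cyc_next_def s_def using ne by auto
  have dist: "c \<notin> fst ` set ps" "distinct (map fst ps)"
    using Cons.prems(2) p by auto
  have "tail_dominated (fst ` set ps) {x \<in> S. (lab(s := Some l)) x = None}"
  proof -
    have "fst ` set ps = fst ` set (p # ps) - {c}"
      using dist by (auto simp: p)
    moreover have "{x \<in> S. (lab(s := Some l)) x = None} = F - {s}"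
      by (auto simp: F_def)
    ultimately show ?thesis
      using tail_dominated_remove_pair[OF fin(1,2) c s s_min dom] by simp
  qed
  then have "snd (pair_seq r S ps (lab(s := Some l)) acc) = acc"
    using Cons.IH[OF Cons.prems(1) dist(2)] by blast
  then show ?case
    using next_s s(2) by (simp add: p Let_def F_def[symmetric])
qed

lemma pair_seq_labels:
  "fst (pair_seq r S ps lab acc) c = Some l \<Longrightarrow> lab c = Some l \<or> l \<in> snd ` set ps"
proof (induction ps arbitrary: lab acc)
  case Nil
  then show ?case by simp
next
  case (Cons p ps)
  obtain c0 l0 where p: "p = (c0, l0)"
    by (cases p)
  define c' where "c' = cyc_next c0 {x \<in> S. lab x = None}"
  define acc' where "acc' = (if c' < c0 then acc + (l0 + 1 - r) else acc)"
  have "fst (pair_seq r S ps (lab(c' := Some l0)) acc') c = Some l"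
    using Cons.prems by (simp add: p Let_def c'_def acc'_def)
  then have "(lab(c' := Some l0)) c = Some l \<or> l \<in> snd ` set ps"
    by (rule Cons.IH)
  then show ?case
    by (cases "c = c'") (auto simp: p)
qed

lemma label_order_cols:
  assumes "finite M" "\<forall>c\<in>M. \<exists>l\<in>set ls. f c = Some l"
  shows "fst ` set (concat (map (\<lambda>l. map (\<lambda>c. (c, l))
           (sorted_list_of_set {c \<in> M. f c = Some l})) ls)) = M"
  using assms by (auto simp: image_iff)

lemma distinct_label_order_cols:
  assumes "finite M" "distinct ls"
  shows "distinct (map fst (concat (map (\<lambda>l. map (\<lambda>c. (c, l))
           (sorted_list_of_set {c \<in> M. f c = Some l})) ls)))"
  using assms by (induction ls) (auto simp: map_concat comp_def)

text \<open>No pairing wraps around, by domination; the hypothesis on lab is the invariant of the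
  recursion.\<close>
lemma maj_aux_eq_0:
  "(\<forall>r. finite (M r)) \<Longrightarrow> (\<forall>r. 2 \<le> r \<longrightarrow> tail_dominated (M r) (M (r - 1))) \<Longrightarrow> r \<le> tp
   \<Longrightarrow> (\<forall>c l. lab c = Some l \<longrightarrow> r < l \<and> l \<le> tp) \<Longrightarrow> maj_aux tp M r lab = 0"
proof (induction tp M r lab rule: maj_aux.induct)
  case (3 tp M k lab)
  define r where "r = Suc (Suc k)"
  define labr where "labr = (\<lambda>c. case lab c of Some l \<Rightarrow> Some l
                                  | None \<Rightarrow> (if c \<in> M r then Some r else None))"
  define seq where "seq = concat (map (\<lambda>l. map (\<lambda>c. (c, l))
                                    (sorted_list_of_set {c \<in> M r. labr c = Some l}))
                           (rev [r..<tp + 1]))"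
  define res where "res = pair_seq r (M (Suc k)) seq (\<lambda>_. None) 0"
  have maj_aux_eq: "maj_aux tp M (Suc (Suc k)) lab = snd res + maj_aux tp M (Suc k) (fst res)"
    by (simp only: maj_aux.simps(3) Let_def r_def labr_def seq_def res_def)
  have fin: "finite (M r)"
    using "3.prems"(1) by blast
  have "\<forall>c\<in>M r. \<exists>l\<in>set (rev [r..<tp + 1]). labr c = Some l"
    using "3.prems"(3,4) by (fastforce simp: labr_def r_def split: option.split)
  then have cols: "fst ` set seq = M r"
    unfolding seq_def by (rule label_order_cols[OF fin])
  have "tail_dominated (M r) (M (Suc k))"
    using "3.prems"(2)[rule_format, of r] by (simp add: r_def)
  moreover have "distinct (map fst seq)"
    unfolding seq_def by (rule distinct_label_order_cols[OF fin]) simp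
  ultimately have "snd res = 0"
    unfolding res_def using pair_seq_no_wrap "3.prems"(1) cols by simp
  moreover have "\<forall>c l. fst res c = Some l \<longrightarrow> Suc k < l \<and> l \<le> tp"
    using pair_seq_labels[of r "M (Suc k)" seq "\<lambda>_. None" 0]
    by (fastforce simp: res_def seq_def r_def)
  then have "maj_aux tp M (Suc k) (fst res) = 0"
    using "3.IH"[OF r_def labr_def seq_def res_def] "3.prems" by simp
  ultimately show ?case
    using maj_aux_eq by simp
qed simp_all

section \<open>The shape of rhoN\<close>

lemma conj_eq_0_if_first_part_less:
  assumes mu: "is_partition mu" and j: "first_part mu < j"
  shows "conj mu j = 0"
proof -
  have "mu ! i \<le> first_part mu" if "i < length mu" for i
  proof -
    have "mu ! i \<le> mu ! 0"
      using mu that sorted_wrt_nth_less[of "(\<ge>)" mu 0 i] unfolding is_partition_def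
      by (cases i) auto
    then show ?thesis
      using that by (auto simp: first_part_def hd_conv_nth)
  qed
  then have "{i. i < length mu \<and> j \<le> mu ! i} = {}"
    using j by fastforce
  then show ?thesis
    by (simp add: conj_def)
qed

definition conj_of :: "(nat \<Rightarrow> nat) \<Rightarrow> nat \<Rightarrow> nat list" where
  "conj_of s L = map (\<lambda>i. card {j \<in> {1..L}. i < s j}) [0..<s 1]"

context
  fixes s :: "nat \<Rightarrow> nat" and L :: nat
  assumes antimono: "\<And>j j'. 1 \<le> j \<Longrightarrow> j \<le> j' \<Longrightarrow> s j' \<le> s j"
    and beyond: "\<And>j. L < j \<Longrightarrow> s j = 0"
begin

lemma le_card_rows_longer_iff:
  assumes j: "1 \<le> j"
  shows "j \<le> card {j' \<in> {1..L}. i < s j'} \<longleftrightarrow> i < s j"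
proof
  assume "i < s j"
  moreover have "j \<le> L"
    using beyond[of j] \<open>i < s j\<close> by (cases "L < j") simp_all
  moreover have "s j \<le> s x" if "x \<in> {1..j}" for x
    using antimono[of x j] that by simp
  ultimately have "{1..j} \<subseteq> {j' \<in> {1..L}. i < s j'}"
    by fastforce
  then show "j \<le> card {j' \<in> {1..L}. i < s j'}"
    using card_mono[of "{j' \<in> {1..L}. i < s j'}" "{1..j}"] by simp
next
  assume le: "j \<le> card {j' \<in> {1..L}. i < s j'}"
  show "i < s j"
  proof (rule ccontr)
    assume "\<not> i < s j"
    have "{j' \<in> {1..L}. i < s j'} \<subseteq> {1..j - 1}"
    proof
      fix x
      assume x: "x \<in> {j' \<in> {1..L}. i < s j'}"
      have "\<not> j \<le> x"
      proof
        assume "j \<le> x"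
        then have "s x \<le> s j"
          by (rule antimono[OF j])
        then show False
          using x \<open>\<not> i < s j\<close> by simp
      qed
      then show "x \<in> {1..j - 1}"
        using x by simp
    qed
    then show False
      using le j card_mono[of "{1..j - 1}" "{j' \<in> {1..L}. i < s j'}"] by simp
  qed
qed

lemma conj_conj_of: "1 \<le> j \<Longrightarrow> conj (conj_of s L) j = s j"
proof -
  assume j: "1 \<le> j"
  have "{i. i < length (conj_of s L) \<and> j \<le> conj_of s L ! i} = {i. i < s 1 \<and> i < s j}"
  proof (rule Collect_cong)
    fix i
    show "i < length (conj_of s L) \<and> j \<le> conj_of s L ! i \<longleftrightarrow> i < s 1 \<and> i < s j"
      using le_card_rows_longer_iff[OF j, of i] by (cases "i < s 1") (simp_all add: conj_of_def)
  qed
  also have "\<dots> = {..<s j}"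
    using antimono[of 1 j] j by auto
  finally show ?thesis
    by (simp add: conj_def)
qed

lemma is_partition_conj_of: "is_partition (conj_of s L)"
  unfolding is_partition_def
proof
  show "sorted_wrt (\<ge>) (conj_of s L)"
    unfolding sorted_wrt_iff_nth_less
  proof (intro allI impI)
    fix i j
    assume ij: "i < j" "j < length (conj_of s L)"
    have "card {x \<in> {1..L}. j < s x} \<le> card {x \<in> {1..L}. i < s x}"
      using ij(1) by (intro card_mono) auto
    then show "conj_of s L ! j \<le> conj_of s L ! i"
      using ij by (simp add: conj_of_def)
  qed
  show "0 \<notin> set (conj_of s L)"
  proof
    assume "0 \<in> set (conj_of s L)"
    then obtain i where i: "i < s 1" and card0: "card {j \<in> {1..L}. i < s j} = 0"
      by (auto simp: conj_of_def)
    have "1 \<le> card {j \<in> {1..L}. i < s j}"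
      using le_card_rows_longer_iff[of 1 i] i by blast
    then show False
      using card0 by linarith
  qed
qed

end

lemma rhoN_in_MLset: "B \<in> MLset L n \<Longrightarrow> rhoN L n B \<in> MLset L n"
  unfolding rhoN_def by (rule stage_in_MLset) simp_all

lemma rhoN_row_dominated:
  assumes B: "B \<in> MLset L n" and r: "2 \<le> r"
  shows "tail_dominated (rhoN L n B r) (rhoN L n B (r - 1))"
proof (cases "r \<le> L")
  case True
  then show ?thesis
    using stage_inv_stage[OF B le_refl] r by (simp add: stage_inv_def rhoN_def)
next
  case False
  then have "rhoN L n B r = {}"
    using rhoN_in_MLset[OF B] unfolding MLset_def by simp
  then show ?thesis
    by (simp add: tail_dominated_def tail_card_def)
qed

lemma card_rhoN_antimono:
  assumes B: "B \<in> MLset L n" and j: "1 \<le> j" "j \<le> j'"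
  shows "card (rhoN L n B j') \<le> card (rhoN L n B j)"
  using j(2)
proof (induction j' rule: dec_induct)
  case (step m)
  then have "card (rhoN L n B (Suc m)) \<le> card (rhoN L n B m)"
    using tail_dominated_card_le[OF rhoN_row_dominated[OF B, of "Suc m"]] j(1) by simp
  then show ?case
    using step.IH by simp
qed simp

lemma card_rhoN_beyond: "B \<in> MLset L n \<Longrightarrow> L < j \<Longrightarrow> card (rhoN L n B j) = 0"
  using rhoN_in_MLset unfolding MLset_def by simp

lemma rhoN_in_MLQ0:
  assumes B: "B \<in> MLset L n" and mu: "is_partition mu"
    and conj_mu: "\<And>j. 1 \<le> j \<Longrightarrow> conj mu j = card (rhoN L n B j)"
  shows "rhoN L n B \<in> MLQ0 mu n"
proof -
  let ?M = "rhoN L n B"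
  have M: "?M \<in> MLset L n"
    by (rule rhoN_in_MLset[OF B])
  have "?M j = {}" if "first_part mu < j" for j
  proof -
    have "card (?M j) = 0"
      using conj_eq_0_if_first_part_less[OF mu that] conj_mu[of j] that by simp
    then show ?thesis
      using MLset_finite_row[OF M] by simp
  qed
  moreover have "?M 0 = {}"
    using M unfolding MLset_def by simp
  ultimately have "?M \<in> MLQ mu n"
    using MLset_row_subset[OF M] conj_mu unfolding MLQ_def by auto
  moreover have "maj mu ?M = 0"
    unfolding maj_def
    using MLset_finite_row[OF M] rhoN_row_dominated[OF B] by (intro maj_aux_eq_0) auto
  ultimately show ?thesis
    by (simp add: MLQ0_def)
qed

section \<open>The recording tableau rhoQ\<close>

lemma sorted_nth_less_if_length_filter_le:
  fixes xs ys :: "'a::linorder list"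
  assumes xs: "sorted xs" and ys: "sorted ys"
    and le: "\<And>v. length (filter (\<lambda>x. x \<le> v) ys) \<le> length (filter (\<lambda>x. x < v) xs)"
    and c: "c < length ys"
  shows "xs ! c < ys ! c"
proof (rule ccontr)
  assume "\<not> xs ! c < ys ! c"
  have "{..c} \<subseteq> {j. j < length ys \<and> ys ! j \<le> ys ! c}"
    using c sorted_nth_mono[OF ys] by auto
  then have "Suc c \<le> length (filter (\<lambda>x. x \<le> ys ! c) ys)"
    unfolding length_filter_conv_card using card_mono[of _ "{..c}"] by fastforce
  moreover have "{j. j < length xs \<and> xs ! j < ys ! c} \<subseteq> {..<c}"
  proof
    fix j
    assume j: "j \<in> {j. j < length xs \<and> xs ! j < ys ! c}"
    show "j \<in> {..<c}"
    proof (rule ccontr)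
      assume "j \<notin> {..<c}"
      then have "xs ! c \<le> xs ! j"
        using j sorted_nth_mono[OF xs, of c j] by simp
      moreover have "xs ! j < xs ! c"
        using j leI[OF \<open>\<not> xs ! c < ys ! c\<close>] by (auto intro: less_le_trans)
      ultimately show False
        by (simp add: leD)
    qed
  qed
  then have "length (filter (\<lambda>x. x < ys ! c) xs) \<le> c"
    unfolding length_filter_conv_card using card_mono[of "{..<c}"] by fastforce
  ultimately show False
    using le[of "ys ! c"] by simp
qed

definition blocks :: "(nat \<Rightarrow> nat) \<Rightarrow> nat \<Rightarrow> nat list" where
  "blocks m L = concat (map (\<lambda>i. replicate (m i) i) [1..<L + 1])"

lemma blocks_0 [simp]: "blocks m 0 = []"
  by (simp add: blocks_def)

lemma blocks_Suc: "blocks m (Suc L) = blocks m L @ replicate (m (Suc L)) (Suc L)"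
  by (simp add: blocks_def)

lemma set_blocks: "set (blocks m L) \<subseteq> {1..L}"
  by (induction L) (auto simp: blocks_Suc)

lemma sorted_blocks: "sorted (blocks m L)"
proof (induction L)
  case (Suc L)
  then show ?case
    using set_blocks[of m L] by (auto simp: blocks_Suc sorted_append)
qed simp

lemma length_filter_blocks:
  "length (filter P (blocks m L)) = (\<Sum>i\<in>{i \<in> {1..L}. P i}. m i)"
proof -
  have "length (filter P (blocks m L)) = (\<Sum>i=1..L. if P i then m i else 0)"
    by (induction L) (auto simp: blocks_Suc)
  also have "\<dots> = (\<Sum>i\<in>{i \<in> {1..L}. P i}. m i)"
    by (rule sum.inter_filter[symmetric]) simp
  finally show ?thesis .
qed

lemma length_blocks: "length (blocks m L) = (\<Sum>i=1..L. m i)"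
  by (induction L) (simp_all add: blocks_Suc)

lemma count_list_blocks: "count_list (blocks m L) x = (if 1 \<le> x \<and> x \<le> L then m x else 0)"
proof -
  have "count_list (replicate k a) x = (if a = x then k else 0)" for k a
    by (induction k) auto
  then show ?thesis
    by (induction L) (auto simp: blocks_Suc)
qed

lemma rhoQ_eq_blocks:
  "rhoQ L n B r = (if 1 \<le> r \<and> r \<le> L then blocks (\<lambda>i. nat (rhoQ_mult L n B r i)) L else [])"
  by (simp add: rhoQ_def blocks_def)

lemma rhoQ_mult_nonneg:
  assumes B: "B \<in> MLset L n"
  shows "0 \<le> rhoQ_mult L n B r i"
proof (cases "1 \<le> r \<and> r < i \<and> i \<le> L")
  case True
  then obtain k where k: "i = Suc k"
    by (cases i) auto
  then have "card (stage L n k B r) \<le> card (stage L n (Suc k) B r)"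
    using card_stage_le_Suc[OF B, of k r] True by simp
  then show ?thesis
    using True k by (simp add: rhoQ_mult_def)
qed (auto simp: rhoQ_mult_def)

lemma sum_rhoQ_mult:
  assumes B: "B \<in> MLset L n" and r: "1 \<le> r"
  shows "V \<le> L \<Longrightarrow>
    (\<Sum>i=1..V. nat (rhoQ_mult L n B r i)) = (if r \<le> V then card (stage L n V B r) else 0)"
proof (induction V)
  case 0
  then show ?case
    using r by simp
next
  case (Suc V)
  have sum_Suc: "(\<Sum>i=1..Suc V. nat (rhoQ_mult L n B r i)) =
      (\<Sum>i=1..V. nat (rhoQ_mult L n B r i)) + nat (rhoQ_mult L n B r (Suc V))"
    by (simp add: sum.cl_ivl_Suc)
  consider "r \<le> V" | "r = Suc V" | "Suc V < r"
    by linarith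
  then show ?case
  proof cases
    case 1
    have "card (stage L n V B r) \<le> card (stage L n (Suc V) B r)"
      using card_stage_le_Suc[OF B] 1 r Suc.prems by simp
    moreover have "rhoQ_mult L n B r (Suc V) =
        int (card (stage L n (Suc V) B r)) - int (card (stage L n V B r))"
      using 1 r Suc.prems by (simp add: rhoQ_mult_def)
    ultimately show ?thesis
      using sum_Suc Suc 1 by simp
  next
    case 2
    then have "rhoQ_mult L n B r (Suc V) = int (card (stage L n (Suc V) B r))"
      using r Suc.prems by (simp add: rhoQ_mult_def)
    then show ?thesis
      using sum_Suc Suc 2 by simp
  next
    case 3
    then have "rhoQ_mult L n B r (Suc V) = 0"
      by (simp add: rhoQ_mult_def)
    then show ?thesis
      using sum_Suc Suc 3 by simp
  qed
qed

lemma length_filter_rhoQ: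
  assumes B: "B \<in> MLset L n" and r: "1 \<le> r" "r \<le> L"
    and P: "{i \<in> {1..L}. P i} = {1..V}" and V: "V \<le> L"
  shows "length (filter P (rhoQ L n B r)) = (if r \<le> V then card (stage L n V B r) else 0)"
  using r P sum_rhoQ_mult[OF B r(1) V] by (simp add: rhoQ_eq_blocks length_filter_blocks)

lemma rhoQ_column_strict:
  assumes B: "B \<in> MLset L n" and r: "1 \<le> r" and c: "c < length (rhoQ L n B (r + 1))"
  shows "rhoQ L n B r ! c < rhoQ L n B (r + 1) ! c"
proof (rule sorted_nth_less_if_length_filter_le)
  have rL: "r + 1 \<le> L"
    using c by (simp add: rhoQ_def split: if_splits)
  fix v
  have le: "length (filter (\<lambda>x. x \<le> v) (rhoQ L n B (r + 1))) =
      (if r + 1 \<le> min v L then card (stage L n (min v L) B (r + 1)) else 0)"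
    by (rule length_filter_rhoQ[OF B]) (use rL in auto)
  have less: "length (filter (\<lambda>x. x < v) (rhoQ L n B r)) =
      (if r \<le> min (v - 1) L then card (stage L n (min (v - 1) L) B r) else 0)"
    by (rule length_filter_rhoQ[OF B r]) (use rL in auto)
  show "length (filter (\<lambda>x. x \<le> v) (rhoQ L n B (r + 1))) \<le> length (filter (\<lambda>x. x < v) (rhoQ L n B r))"
  proof (cases "r + 1 \<le> min v L")
    case True
    show ?thesis
    proof (cases "v \<le> L")
      case True
      then obtain k where "v = Suc k"
        using \<open>r + 1 \<le> min v L\<close> by (cases v) auto
      then show ?thesis
        using le less card_stage_Suc_le[OF B, of k "r + 1"] \<open>r + 1 \<le> min v L\<close> True r
        by simp
    next
      case False
      then show ?thesis
        using le less rL card_rhoN_antimono[OF B r, of "r + 1"] by (simp add: rhoN_def)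
    qed
  next
    case False
    then have "length (filter (\<lambda>x. x \<le> v) (rhoQ L n B (r + 1))) = 0"
      using le by (simp only: if_False)
    then show ?thesis
      by simp
  qed
qed (use c in \<open>simp_all add: rhoQ_eq_blocks sorted_blocks\<close>)

lemma is_ssyt_rhoQ:
  assumes B: "B \<in> MLset L n" and sh: "\<And>r. 1 \<le> r \<Longrightarrow> sh r = card (rhoN L n B r)"
  shows "is_ssyt (rhoQ L n B) sh"
  unfolding is_ssyt_def
proof (intro conjI allI impI ballI)
  fix r :: nat
  assume r: "1 \<le> r"
  show "length (rhoQ L n B r) = sh r"
  proof (cases "r \<le> L")
    case True
    then show ?thesis
      using sh[OF r] r sum_rhoQ_mult[OF B r le_refl]
      by (simp add: rhoQ_eq_blocks length_blocks rhoN_def)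
  next
    case False
    then show ?thesis
      using sh[OF r] card_rhoN_beyond[OF B] by (simp add: rhoQ_def)
  qed
next
  fix r x
  assume "x \<in> set (rhoQ L n B r)"
  then show "1 \<le> x"
    using set_blocks by (fastforce simp: rhoQ_eq_blocks split: if_splits)
next
  fix r c :: nat
  assume "1 \<le> r \<and> c < length (rhoQ L n B (r + 1))"
  then show "rhoQ L n B r ! c < rhoQ L n B (r + 1) ! c"
    using rhoQ_column_strict[OF B] by blast
qed (simp_all add: rhoQ_eq_blocks sorted_blocks)

lemma sum_rhoQ_mult_over_rows:
  assumes B: "B \<in> MLset L n" and i: "1 \<le> i" "i \<le> L"
  shows "(\<Sum>r\<in>{1..L}. rhoQ_mult L n B r i) = int (card (B i))"
proof -
  obtain k where k: "i = Suc k"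
    using i by (cases i) auto
  have "(\<Sum>r\<in>{1..L}. rhoQ_mult L n B r i) = (\<Sum>r\<in>{1..i}. rhoQ_mult L n B r i)"
    by (rule sum.mono_neutral_right) (use i in \<open>auto simp: rhoQ_mult_def\<close>)
  also have "\<dots> = (\<Sum>r\<in>{1..i}. int (card (stage L n i B r)))
                 - (\<Sum>r\<in>{1..k}. int (card (stage L n k B r)))"
    using i k by (simp add: rhoQ_mult_def sum.cl_ivl_Suc sum_subtractf)
  also have "\<dots> = int (\<Sum>r\<in>{1..i}. card (B r)) - int (\<Sum>r\<in>{1..k}. card (B r))"
    using sum_card_stage[OF B i(2) le_refl] sum_card_stage[OF B _ le_refl, of k] i k
    by (simp flip: of_nat_sum)
  also have "\<dots> = int (card (B i))"
    using k by (simp add: sum.cl_ivl_Suc)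
  finally show ?thesis .
qed

lemma sum_count_list_rhoQ:
  assumes B: "B \<in> MLset L n" and i: "1 \<le> i"
  shows "(\<Sum>r\<in>{1..L}. count_list (rhoQ L n B r) i) = card (B i)"
proof (cases "i \<le> L")
  case True
  have "int (\<Sum>r\<in>{1..L}. count_list (rhoQ L n B r) i) = (\<Sum>r\<in>{1..L}. rhoQ_mult L n B r i)"
    using i True rhoQ_mult_nonneg[OF B] by (simp add: rhoQ_eq_blocks count_list_blocks)
  then show ?thesis
    using sum_rhoQ_mult_over_rows[OF B i True] by (simp del: of_nat_sum)
next
  case False
  then have "B i = {}"
    using B unfolding MLset_def by simp
  then show ?thesis
    using False by (simp add: rhoQ_eq_blocks count_list_blocks)
qed

theorem proposition4p8:
  fixes L n :: nat and B :: "nat \<Rightarrow> nat set"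
  assumes "0 < L" and "0 < n" and "B \<in> MLset L n"
  shows "\<exists>mu. is_partition mu \<and> length mu \<le> n \<and> rhoN L n B \<in> MLQ0 mu n
           \<and> (\<forall>r i. 0 \<le> rhoQ_mult L n B r i)
           \<and> is_ssyt (rhoQ L n B) (conj mu)
           \<and> (\<forall>i. 1 \<le> i \<longrightarrow> (\<Sum>r\<in>{1..L}. count_list (rhoQ L n B r) i) = card (B i))"
proof -
  note B = assms(3)
  define s where "s j = card (rhoN L n B j)" for j
  define mu where "mu = conj_of s L"
  have s_antimono: "\<And>j j'. 1 \<le> j \<Longrightarrow> j \<le> j' \<Longrightarrow> s j' \<le> s j"
    unfolding s_def by (rule card_rhoN_antimono[OF B])
  have s_beyond: "\<And>j. L < j \<Longrightarrow> s j = 0"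
    unfolding s_def by (rule card_rhoN_beyond[OF B])
  have mu: "is_partition mu" and conj_mu: "\<And>j. 1 \<le> j \<Longrightarrow> conj mu j = s j"
    unfolding mu_def using is_partition_conj_of conj_conj_of s_antimono s_beyond by blast+
  have "length mu \<le> n"
    using card_mono[OF _ MLset_row_subset[OF rhoN_in_MLset[OF B], of 1]]
    by (simp add: mu_def conj_of_def s_def)
  then show ?thesis
    using mu conj_mu rhoN_in_MLQ0[OF B mu] rhoQ_mult_nonneg[OF B] is_ssyt_rhoQ[OF B]
      sum_count_list_rhoQ[OF B]
    by (auto simp: s_def)
qed

end
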